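(* Let $a$ be a real number with $|a|<1$, let $n$ be a real number and $i$ a nonnegative integer, and put $\Theta(\varphi)=\dfrac{1+a^2-2a\cos\varphi}{1-a^2}$. Then $$\binom{n}{i}\int_0^{\pi}\frac{\cos(i\varphi)}{\Theta(\varphi)^{n+1}}\,d\varphi=\binom{-n-1}{i}\int_0^{\pi}\Theta(\varphi)^{n}\cos(i\varphi)\,d\varphi .$$
   Context: For a real number $m$ and a nonnegative integer $k$, $\binom{m}{k}=\frac{m(m-1)\cdots(m-k+1)}{k!}$ is the coefficient of $v^k$ in the binomial expansion of $(1+v)^m$. *)

theory Defs
  imports "HOL-Analysis.Analysis"
begin

definition Theta :: "real \<Rightarrow> real \<Rightarrow> real" where
  "Theta a \<phi> = (1 + a^2 - 2 * a * cos \<phi>) / (1 - a^2)"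

end

(*
  Write Theta a = c - b cos with c^2 - b^2 = 1 and let J p j be the j-th cosine moment of
  (c - b cos)^p on [0, pi]. Integrating the derivative of (c - b cos)^(p+1) sin ((j+1) phi) gives a
  three-term recurrence in j. Multiplied by binomial coefficients, the sequences
  (x gchoose j) * J (-x-1) j satisfy a recurrence whose coefficients are invariant under
  x |-> -x-1, so the identity reduces to j = 0 and j = 1. These follow from the substitution
  cos psi = (c cos x + b) / (c + b cos x), which carries (c - b cos psi)^(-x-1) d psi to
  (c + b cos x)^x dx, followed by the reflection x |-> pi - x.
*)

theory Submission
  imports Defs
begin

definition cos_moment :: "real \<Rightarrow> real \<Rightarrow> real \<Rightarrow> nat \<Rightarrow> real" where
  "cos_moment c b p j = integral {0..pi} (\<lambda>\<phi>. (c - b * cos \<phi>) powr p * cos (real j * \<phi>))"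

lemma Theta_eq_cos_affine:
  assumes "\<bar>a\<bar> < 1"
  obtains c b where "c\<^sup>2 - b\<^sup>2 = 1" "\<bar>b\<bar> < c" "\<And>\<phi>. Theta a \<phi> = c - b * cos \<phi>"
proof
  have denom_pos: "1 - a\<^sup>2 > 0"
    using assms abs_square_less_1 by force
  have "(1 + a\<^sup>2)\<^sup>2 - (2 * a)\<^sup>2 = (1 - a\<^sup>2)\<^sup>2"
    by algebra
  with denom_pos show "((1 + a\<^sup>2) / (1 - a\<^sup>2))\<^sup>2 - (2 * a / (1 - a\<^sup>2))\<^sup>2 = 1"
    by (simp add: power_divide diff_divide_distrib[symmetric])
  have "(1 + a\<^sup>2) - \<bar>2 * a\<bar> = (1 - \<bar>a\<bar>)\<^sup>2"
    by (simp add: power2_eq_square abs_mult algebra_simps)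
  with assms have "\<bar>2 * a\<bar> < 1 + a\<^sup>2"
    by (smt (verit) zero_less_power2)
  with denom_pos show "\<bar>2 * a / (1 - a\<^sup>2)\<bar> < (1 + a\<^sup>2) / (1 - a\<^sup>2)"
    by (simp add: divide_strict_right_mono)
  show "Theta a \<phi> = (1 + a\<^sup>2) / (1 - a\<^sup>2) - 2 * a / (1 - a\<^sup>2) * cos \<phi>" for \<phi>
    unfolding Theta_def by (simp add: diff_divide_distrib)
qed

lemma cos_affine_pos:
  fixes b c x :: real
  assumes "\<bar>b\<bar> < c"
  shows "0 < c - b * cos x"
proof -
  have "\<bar>b * cos x\<bar> \<le> \<bar>b\<bar>"
    by (simp add: abs_mult mult_left_le)
  with assms show ?thesis by linarith
qed

lemma has_integral_cos_moment:
  fixes b c p :: real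
  assumes "\<bar>b\<bar> < c"
  shows "((\<lambda>\<phi>. (c - b * cos \<phi>) powr p * cos (real j * \<phi>)) has_integral cos_moment c b p j) {0..pi}"
  unfolding cos_moment_def
  using cos_affine_pos[OF assms]
  by (intro integrable_integral integrable_continuous_interval continuous_intros) (metis less_irrefl)

text \<open>Integrate the derivative of \<open>(c - b cos \<phi>) powr (p + 1) * sin ((k + 1) \<phi>)\<close>, which vanishes
  at \<open>0\<close> and \<open>\<pi>\<close>.\<close>

lemma cos_moment_recurrence:
  fixes b c p :: real
  assumes "\<bar>b\<bar> < c"
  shows "(b/2) * (real k + p + 2) * cos_moment c b p (k + 2)
       = (real k + 1) * c * cos_moment c b p (k + 1) + (b/2) * (p - real k) * cos_moment c b p k"
proof -
  define T where "T = (\<lambda>\<phi>. c - b * cos \<phi>)"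
  define J where "J = cos_moment c b p"
  have T_pos: "T x > 0" for x
    unfolding T_def using cos_affine_pos[OF assms] .
  define F where "F = (\<lambda>\<phi>. T \<phi> powr (p + 1) * sin (real (Suc k) * \<phi>))"
  define F' where "F' = (\<lambda>\<phi>. (p + 1) * T \<phi> powr p * (b * sin \<phi>) * sin (real (Suc k) * \<phi>)
        + T \<phi> powr (p + 1) * (real (Suc k) * cos (real (Suc k) * \<phi>)))"
  have "(F has_real_derivative F' x) (at x)" for x
    unfolding F_def F'_def T_def using T_pos[of x, unfolded T_def]
    by (auto intro!: derivative_eq_intros simp: powr_diff field_simps)
  then have F_deriv: "(F has_vector_derivative F' x) (at x)" for x
    by (simp add: has_real_derivative_iff_has_vector_derivative)
  have F_cont: "continuous_on {0..pi} F"
    unfolding F_def T_def using T_pos[unfolded T_def]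
    by (intro continuous_intros) (metis less_irrefl)
  have "F pi - F 0 = 0"
    unfolding F_def using sin_npi[of "Suc k"] by (simp del: of_nat_Suc)
  then have F'_zero: "(F' has_integral 0) {0..pi}"
    using fundamental_theorem_of_calculus_interior[OF _ F_cont F_deriv] by simp
  have F'_eq: "F' x = (p + 1) * (b/2) * (T x powr p * cos (real k * x) - T x powr p * cos (real (k + 2) * x))
      + (real k + 1) * c * (T x powr p * cos (real (k + 1) * x))
      - (real k + 1) * (b/2) * (T x powr p * cos (real k * x) + T x powr p * cos (real (k + 2) * x))" for x
  proof -
    have shift: "cos (real k * x) = cos (real (Suc k) * x - x)"
                "cos (real (k + 2) * x) = cos (real (Suc k) * x + x)"
      by (simp_all add: algebra_simps)
    have T_powr: "T x powr (p + 1) = T x powr p * (c - b * cos x)"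
      using T_pos[of x] by (simp add: powr_add T_def)
    show ?thesis
      unfolding F'_def shift cos_add cos_diff T_powr by (simp add: field_simps)
  qed
  have "(F' has_integral (p + 1) * (b/2) * (J k - J (k + 2)) + (real k + 1) * c * J (k + 1)
                        - (real k + 1) * (b/2) * (J k + J (k + 2))) {0..pi}"
    unfolding F'_eq[abs_def] J_def T_def
    by (intro has_integral_add has_integral_diff has_integral_mult_right has_integral_cos_moment assms)
  from has_integral_unique[OF F'_zero this] show ?thesis
    unfolding J_def[symmetric] by (simp add: field_simps)
qed

lemma cos_moment_Suc_exponent:
  fixes b c p :: real
  assumes "\<bar>b\<bar> < c"
  shows "cos_moment c b (p + 1) 1
       = c * cos_moment c b p 1 - (b/2) * (cos_moment c b p 0 + cos_moment c b p 2)"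
proof -
  define T where "T = (\<lambda>\<phi>. c - b * cos \<phi>)"
  have eq: "T x powr (p + 1) * cos (real 1 * x) = c * (T x powr p * cos (real 1 * x))
     - (b/2) * (T x powr p * cos (real 0 * x) + T x powr p * cos (real 2 * x))" for x
  proof -
    have T_powr: "T x powr (p + 1) = T x powr p * T x"
      using cos_affine_pos[OF assms, of x] by (simp add: powr_add T_def)
    have cos_2: "cos (real 2 * x) = 2 * cos x * cos x - 1"
      by (simp add: cos_double_cos power2_eq_square)
    show ?thesis
      unfolding T_powr cos_2 by (simp add: T_def algebra_simps)
  qed
  have "((\<lambda>\<phi>. T \<phi> powr (p + 1) * cos (real 1 * \<phi>)) has_integral
          c * cos_moment c b p 1 - (b/2) * (cos_moment c b p 0 + cos_moment c b p 2)) {0..pi}"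
    unfolding eq unfolding T_def
    by (intro has_integral_add has_integral_diff has_integral_mult_right has_integral_cos_moment assms)
  with has_integral_cos_moment[OF assms] show ?thesis
    unfolding T_def using has_integral_unique by blast
qed

definition mobius_cos :: "real \<Rightarrow> real \<Rightarrow> real \<Rightarrow> real" where
  "mobius_cos c b x = (c * cos x + b) / (c + b * cos x)"

lemma mobius_cos_abs_le:
  fixes b c x :: real
  assumes "\<bar>b\<bar> < c"
  shows "\<bar>mobius_cos c b x\<bar> \<le> 1"
    and "x \<in> {0<..<pi} \<Longrightarrow> \<bar>mobius_cos c b x\<bar> < 1"
proof -
  define D where "D = c + b * cos x"
  have D_pos: "D > 0"
    unfolding D_def using cos_affine_pos[of "-b" c x] assms by simp
  have "c - b > 0" "c + b > 0"
    using assms by linarith+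
  have minus_one: "mobius_cos c b x - 1 = (c - b) * (cos x - 1) / D"
   and plus_one: "mobius_cos c b x + 1 = (c + b) * (cos x + 1) / D"
    using D_pos unfolding mobius_cos_def D_def by (simp_all add: field_simps)
  have "cos x - 1 \<le> 0" "cos x + 1 \<ge> 0"
    using cos_le_one[of x] cos_ge_minus_one[of x] by linarith+
  then have "(c - b) * (cos x - 1) / D \<le> 0" "(c + b) * (cos x + 1) / D \<ge> 0"
    using \<open>c - b > 0\<close> \<open>c + b > 0\<close> D_pos
    by (auto intro!: divide_nonpos_pos mult_nonneg_nonpos divide_nonneg_pos mult_nonneg_nonneg)
  then show "\<bar>mobius_cos c b x\<bar> \<le> 1"
    using minus_one plus_one by linarith
  assume "x \<in> {0<..<pi}"
  then have "cos x < 1" "cos x > -1"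
    using cos_monotone_0_pi[of 0 x] cos_monotone_0_pi[of x pi] by auto
  then have "(c - b) * (cos x - 1) / D < 0" "(c + b) * (cos x + 1) / D > 0"
    using \<open>c - b > 0\<close> \<open>c + b > 0\<close> D_pos by (auto intro!: divide_neg_pos mult_pos_neg divide_pos_pos)
  then show "\<bar>mobius_cos c b x\<bar> < 1"
    using minus_one plus_one by linarith
qed

lemma cos_affine_mobius_cos:
  fixes b c x :: real
  assumes "c\<^sup>2 - b\<^sup>2 = 1" "\<bar>b\<bar> < c"
  shows "c - b * mobius_cos c b x = 1 / (c + b * cos x)"
proof -
  have "c + b * cos x > 0"
    using cos_affine_pos[of "-b" c x] assms by simp
  with assms(1) show ?thesis
    unfolding mobius_cos_def by (simp add: field_simps power2_eq_square)
qed

text \<open>The key identity is \<open>sqrt (1 - (mobius_cos c b x)\<^sup>2) = sin x / (c + b cos x)\<close> on \<open>(0, \<pi>)\<close>.\<close>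

lemma has_real_derivative_arccos_mobius_cos:
  fixes b c x :: real
  assumes "c\<^sup>2 - b\<^sup>2 = 1" "\<bar>b\<bar> < c" "x \<in> {0<..<pi}"
  shows "((\<lambda>x. arccos (mobius_cos c b x)) has_real_derivative 1 / (c + b * cos x)) (at x)"
proof -
  define D where "D = c + b * cos x"
  define w where "w = mobius_cos c b x"
  have D_pos: "D > 0"
    unfolding D_def using cos_affine_pos[of "-b" c x] assms by simp
  have sin_pos: "sin x > 0"
    using assms(3) by (simp add: sin_gt_zero)
  have cbsq: "c * c = 1 + b * b"
    using assms(1) by (simp add: power2_eq_square)
  have w_deriv: "(mobius_cos c b has_real_derivative - sin x / D\<^sup>2) (at x)"
    unfolding mobius_cos_def[abs_def] D_def using D_pos[unfolded D_def]
    apply (auto intro!: derivative_eq_intros)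
    apply (simp add: field_simps power2_eq_square)
    using cbsq by algebra
  have "D\<^sup>2 - (c * cos x + b)\<^sup>2 = (sin x)\<^sup>2"
    unfolding D_def using cbsq sin_cos_squared_add[of x] by algebra
  moreover have "1 - w\<^sup>2 = (D\<^sup>2 - (c * cos x + b)\<^sup>2) / D\<^sup>2"
    unfolding w_def mobius_cos_def D_def[symmetric] using D_pos by (simp add: power_divide field_simps)
  ultimately have "1 - w\<^sup>2 = (sin x / D)\<^sup>2"
    by (simp add: power_divide)
  then have "sqrt (1 - w\<^sup>2) = sin x / D"
    using sin_pos D_pos by simp
  then have "inverse (- sqrt (1 - w\<^sup>2)) * (- sin x / D\<^sup>2) = 1 / D"
    using sin_pos D_pos by (simp add: field_simps power2_eq_square)
  moreover have "-1 < w" "w < 1"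
    using mobius_cos_abs_le(2)[OF assms(2,3)] unfolding w_def by auto
  ultimately show ?thesis
    using DERIV_chain2[OF DERIV_arccos w_deriv] unfolding w_def D_def by auto
qed

lemma continuous_on_mobius_cos:
  fixes b c :: real
  assumes "\<bar>b\<bar> < c"
  shows "continuous_on S (mobius_cos c b)"
proof -
  have "c + b * cos x > 0" for x
    using cos_affine_pos[of "-b" c x] assms by simp
  then show ?thesis
    unfolding mobius_cos_def[abs_def] by (intro continuous_intros) (metis less_irrefl)+
qed

text \<open>The substitution \<open>cos \<psi> = mobius_cos c b x\<close>; since \<open>c\<^sup>2 - b\<^sup>2 = 1\<close> it turns \<open>c - b cos \<psi>\<close>
  into \<open>1 / (c + b cos x)\<close> and \<open>d\<psi>\<close> into \<open>dx / (c + b cos x)\<close>.\<close>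

lemma integral_mobius_cos_substitution:
  fixes b c m :: real and f :: "real \<Rightarrow> real"
  assumes cb: "c\<^sup>2 - b\<^sup>2 = 1" "\<bar>b\<bar> < c" and f_cont: "continuous_on {-1..1} f"
  shows "integral {0..pi} (\<lambda>\<psi>. f (cos \<psi>) * (c - b * cos \<psi>) powr (-m-1))
       = integral {0..pi} (\<lambda>x. f (mobius_cos c b x) * (c + b * cos x) powr m)"
proof -
  define g where "g = (\<lambda>x. arccos (mobius_cos c b x))"
  define F where "F = (\<lambda>\<psi>. f (cos \<psi>) * (c - b * cos \<psi>) powr (-m-1))"
  have D_pos: "c + b * cos x > 0" for x
    using cos_affine_pos[of "-b" c x] cb by simp
  have w_bounds: "-1 \<le> mobius_cos c b x" "mobius_cos c b x \<le> 1" for x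
    using mobius_cos_abs_le(1)[OF cb(2)] by (auto simp: abs_le_iff)
  have g_cont: "continuous_on {0..pi} g"
    unfolding g_def using w_bounds
    by (intro continuous_on_arccos continuous_on_mobius_cos cb(2)) simp
  have "continuous_on {0..pi} (\<lambda>\<psi>. f (cos \<psi>))"
    by (intro continuous_on_compose2[OF f_cont] continuous_intros) auto
  then have F_cont: "continuous_on {0..pi} F"
    unfolding F_def using cos_affine_pos[OF cb(2)]
    by (intro continuous_intros) (metis less_irrefl)+
  have "mobius_cos c b 0 = 1" "mobius_cos c b pi = -1"
    unfolding mobius_cos_def using cb(2) by (simp_all add: divide_eq_minus_1_iff)
  then have g_ends: "g 0 = 0" "g pi = pi"
    unfolding g_def by simp_all
  have g_range: "g ` {0..pi} \<subseteq> {0..pi}"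
    unfolding g_def using w_bounds arccos_lbound arccos_ubound by auto
  have "(g has_field_derivative 1 / (c + b * cos x)) (at x within {0..pi})"
    if "x \<in> {0..pi} - {0, pi}" for x
    using has_real_derivative_arccos_mobius_cos[OF cb, of x] that
    unfolding g_def by (auto intro: has_field_derivative_at_within)
  then have "((\<lambda>x. (1 / (c + b * cos x)) *\<^sub>R F (g x)) has_integral integral {g 0..g pi} F) {0..pi}"
    by (intro has_integral_substitution_strong[of "{0, pi}"]) (use g_ends g_range F_cont g_cont in auto)
  moreover have "(1 / (c + b * cos x)) *\<^sub>R F (g x) = f (mobius_cos c b x) * (c + b * cos x) powr m" for x
  proof -
    have cos_g: "cos (g x) = mobius_cos c b x"
      unfolding g_def using w_bounds by (simp add: cos_arccos)
    have "(c - b * cos (g x)) powr (-m-1) = (c + b * cos x) powr (m + 1)"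
      using D_pos[of x] powr_minus_divide[of "c + b * cos x" "m + 1"]
      by (simp add: cos_g cos_affine_mobius_cos[OF cb] powr_divide)
    then show ?thesis
      unfolding F_def using D_pos[of x] by (simp add: cos_g powr_add)
  qed
  ultimately show ?thesis
    unfolding g_ends F_def by (simp add: integral_unique)
qed

lemma integral_reflect_pi:
  fixes h :: "real \<Rightarrow> real"
  assumes "continuous_on {0..pi} h"
  shows "integral {0..pi} (\<lambda>x. h (pi - x)) = integral {0..pi} h"
proof -
  have "((\<lambda>x. (-1) *\<^sub>R h (pi - x)) has_integral (integral {pi - 0..pi - pi} h - integral {pi - pi..pi - 0} h)) {0..pi}"
    by (rule has_integral_substitution_general[of "{}" 0 pi "\<lambda>x. pi - x" 0 pi h "\<lambda>_. -1"])
       (auto intro!: assms continuous_intros derivative_eq_intros)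
  then have "((\<lambda>x. - h (pi - x)) has_integral (- integral {0..pi} h)) {0..pi}"
    by simp
  from has_integral_neg[OF this] show ?thesis
    by (simp add: integral_unique)
qed

lemma integral_cos_affine_inversion:
  fixes b c m :: real and f :: "real \<Rightarrow> real"
  assumes cb: "c\<^sup>2 - b\<^sup>2 = 1" "\<bar>b\<bar> < c" and f_cont: "continuous_on {-1..1} f"
  shows "integral {0..pi} (\<lambda>\<psi>. f (cos \<psi>) * (c - b * cos \<psi>) powr (-m-1))
       = integral {0..pi} (\<lambda>x. f ((b - c * cos x) / (c - b * cos x)) * (c - b * cos x) powr m)"
proof -
  define h where "h = (\<lambda>x. f (mobius_cos c b x) * (c + b * cos x) powr m)"
  have D_pos: "c + b * cos x > 0" for x
    using cos_affine_pos[of "-b" c x] cb by simp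
  have "continuous_on {0..pi} (\<lambda>x. f (mobius_cos c b x))"
    using mobius_cos_abs_le(1)[OF cb(2)]
    by (intro continuous_on_compose2[OF f_cont continuous_on_mobius_cos[OF cb(2)]]) (auto simp: abs_le_iff)
  then have h_cont: "continuous_on {0..pi} h"
    unfolding h_def using D_pos by (intro continuous_intros) (metis less_irrefl)+
  have "integral {0..pi} (\<lambda>\<psi>. f (cos \<psi>) * (c - b * cos \<psi>) powr (-m-1)) = integral {0..pi} h"
    unfolding h_def by (rule integral_mobius_cos_substitution[OF assms])
  also have "\<dots> = integral {0..pi} (\<lambda>x. h (pi - x))"
    using integral_reflect_pi[OF h_cont] by simp
  also have "\<dots> = integral {0..pi} (\<lambda>x. f ((b - c * cos x) / (c - b * cos x)) * (c - b * cos x) powr m)"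
    unfolding h_def mobius_cos_def by (simp add: algebra_simps)
  finally show ?thesis .
qed

lemma cos_moment_inversion_0:
  fixes b c x :: real
  assumes "c\<^sup>2 - b\<^sup>2 = 1" "\<bar>b\<bar> < c"
  shows "cos_moment c b (-x-1) 0 = cos_moment c b x 0"
  using integral_cos_affine_inversion[OF assms continuous_on_const, of 1 x]
  unfolding cos_moment_def by simp

lemma cos_moment_inversion_1:
  fixes b c x :: real
  assumes cb: "c\<^sup>2 - b\<^sup>2 = 1" "\<bar>b\<bar> < c"
  shows "x * cos_moment c b (-x-1) 1 = (-x-1) * cos_moment c b x 1"
proof -
  define J where "J = cos_moment c b (x - 1)"
  have "cos_moment c b (-x-1) 1
      = integral {0..pi} (\<lambda>\<phi>. (b - c * cos \<phi>) / (c - b * cos \<phi>) * (c - b * cos \<phi>) powr x)"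
    using integral_cos_affine_inversion[OF cb continuous_on_id, of x]
    unfolding cos_moment_def by (simp add: mult.commute)
  also have "\<dots> = integral {0..pi} (\<lambda>\<phi>. b * ((c - b * cos \<phi>) powr (x - 1) * cos (real 0 * \<phi>))
                                     - c * ((c - b * cos \<phi>) powr (x - 1) * cos (real 1 * \<phi>)))"
  proof (intro integral_cong)
    fix \<phi>
    have "c - b * cos \<phi> > 0"
      using cos_affine_pos[OF cb(2)] .
    then have T_powr: "(c - b * cos \<phi>) powr x = (c - b * cos \<phi>) powr (x - 1) * (c - b * cos \<phi>)"
      using powr_add[of "c - b * cos \<phi>" "x - 1" 1] by simp
    show "(b - c * cos \<phi>) / (c - b * cos \<phi>) * (c - b * cos \<phi>) powr x
        = b * ((c - b * cos \<phi>) powr (x - 1) * cos (real 0 * \<phi>))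
          - c * ((c - b * cos \<phi>) powr (x - 1) * cos (real 1 * \<phi>))"
      unfolding T_powr using \<open>c - b * cos \<phi> > 0\<close> by (simp add: field_simps)
  qed
  also have "\<dots> = b * J 0 - c * J 1"
    unfolding J_def
    by (intro integral_unique has_integral_diff has_integral_mult_right has_integral_cos_moment cb(2))
  finally have inverted: "cos_moment c b (-x-1) 1 = b * J 0 - c * J 1" .
  have lowered: "cos_moment c b x 1 = c * J 1 - (b/2) * (J 0 + J 2)"
    using cos_moment_Suc_exponent[OF cb(2), of "x - 1"] unfolding J_def by simp
  have recurrence: "(b/2) * (x + 1) * J 2 = c * J 1 + (b/2) * (x - 1) * J 0"
    using cos_moment_recurrence[OF cb(2), of 0 "x - 1"] unfolding J_def
    by (simp add: algebra_simps numeral_2_eq_2)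
  have "(-x-1) * cos_moment c b x 1 = - (x + 1) * c * J 1 + (b/2) * (x + 1) * J 0 + (b/2) * (x + 1) * J 2"
    unfolding lowered by (simp add: field_simps)
  also have "\<dots> = x * cos_moment c b (-x-1) 1"
    unfolding recurrence inverted by (simp add: field_simps)
  finally show ?thesis ..
qed

text \<open>The parameter \<open>p = -x-1\<close> is exactly the one for which the recurrence for the moments
  and the absorption identity for \<open>x gchoose k\<close> combine into a recurrence whose coefficients
  are invariant under \<open>x \<mapsto> -x-1\<close>.\<close>

lemma gchoose_cos_moment_recurrence:
  fixes b c x :: real
  assumes cb: "\<bar>b\<bar> < c"
  defines "S \<equiv> \<lambda>j. (x gchoose j) * cos_moment c b (-x-1) j"
  shows "-(b/2) * (real k + 1) * (real k + 2) * S (k + 2)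
       = (real k + 1)\<^sup>2 * c * S (k + 1) + (b/2) * ((real k - x) * (x + real k + 1)) * S k"
proof -
  define B where "B = (\<lambda>j. x gchoose j)"
  define K where "K = cos_moment c b (-x-1)"
  have B1: "(real k + 1) * B (k + 1) = (x - real k) * B k"
   and B2: "(real k + 2) * B (k + 2) = (x - real k - 1) * B (k + 1)"
    unfolding B_def using gbinomial_mult_1[of x k] gbinomial_mult_1[of x "Suc k"]
    by (simp_all add: field_simps)
  have K: "(b/2) * (real k - x + 1) * K (k + 2) = (real k + 1) * c * K (k + 1) + (b/2) * (-x - 1 - real k) * K k"
    using cos_moment_recurrence[OF cb, of k "-x-1"] unfolding K_def by (simp add: algebra_simps)
  have "-(b/2) * (real k + 1) * (real k + 2) * S (k + 2) = -(b/2) * (real k + 1) * K (k + 2) * ((real k + 2) * B (k + 2))"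
    unfolding S_def B_def K_def by (simp add: field_simps)
  also have "\<dots> = (real k + 1) * B (k + 1) * ((b/2) * (real k - x + 1) * K (k + 2))"
    unfolding B2 by (simp add: field_simps)
  also have "\<dots> = (real k + 1) * B (k + 1) * ((real k + 1) * c * K (k + 1) + (b/2) * (-x - 1 - real k) * K k)"
    unfolding K ..
  also have "\<dots> = (real k + 1)\<^sup>2 * c * S (k + 1) + (b/2) * (-x - 1 - real k) * K k * ((real k + 1) * B (k + 1))"
    unfolding S_def B_def K_def by (simp add: algebra_simps power2_eq_square)
  also have "\<dots> = (real k + 1)\<^sup>2 * c * S (k + 1) + (b/2) * ((real k - x) * (x + real k + 1)) * S k"
    unfolding B1 unfolding S_def B_def K_def by (simp add: field_simps)
  finally show ?thesis .
qed

lemma second_order_recurrence_unique: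
  fixes u v :: "nat \<Rightarrow> 'a::field"
  assumes "\<And>k. \<alpha> k * u (k + 2) = \<beta> k * u (k + 1) + \<gamma> k * u k"
      and "\<And>k. \<alpha> k * v (k + 2) = \<beta> k * v (k + 1) + \<gamma> k * v k"
      and "\<And>k. \<alpha> k \<noteq> 0" and "u 0 = v 0" and "u 1 = v 1"
  shows "u k = v k"
proof -
  have "u k = v k \<and> u (k + 1) = v (k + 1)"
  proof (induction k)
    case (Suc k)
    then have "\<alpha> k * u (k + 2) = \<alpha> k * v (k + 2)"
      using assms(1,2)[of k] by simp
    with assms(3) Suc show ?case
      by simp
  qed (use assms(4,5) in simp)
  then show ?thesis ..
qed

lemma gchoose_cos_moment_symmetric:
  fixes b c x :: real
  assumes cb: "c\<^sup>2 - b\<^sup>2 = 1" "\<bar>b\<bar> < c"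
  shows "(x gchoose j) * cos_moment c b (-x-1) j = ((-x-1) gchoose j) * cos_moment c b x j"
proof -
  define S where "S = (\<lambda>y j. (y gchoose j) * cos_moment c b (-y-1) j)"
  have rec: "-(b/2) * (real k + 1) * (real k + 2) * S y (k + 2)
      = (real k + 1)\<^sup>2 * c * S y (k + 1) + (b/2) * ((real k - x) * (x + real k + 1)) * S y k"
    if "y = x \<or> y = -x-1" for y k
  proof -
    have "(real k - y) * (y + real k + 1) = (real k - x) * (x + real k + 1)"
      by (rule disjE[OF that]) (simp, algebra)
    then show ?thesis
      using gchoose_cos_moment_recurrence[OF cb(2), where x=y and k=k] unfolding S_def by simp
  qed
  have base: "S x 0 = S (-x-1) 0" "S x 1 = S (-x-1) 1"
    unfolding S_def using cos_moment_inversion_0[OF cb, of x] cos_moment_inversion_1[OF cb, of x]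
    by simp_all
  have "S x j = S (-x-1) j"
  proof (cases "b = 0")
    case True
    have "S y (Suc k) = 0" if "y = x \<or> y = -x-1" for y k
      using rec[OF that, of k] True cb(2) by simp
    with base(1) show ?thesis
      by (cases j) auto
  next
    case False
    show ?thesis
      using second_order_recurrence_unique[OF rec[OF disjI1[OF refl]] rec[OF disjI2[OF refl]] _ base] False
      by simp
  qed
  then show ?thesis
    unfolding S_def by simp
qed

theorem mainTheorem3:
  fixes a n :: real and i :: nat
  assumes "\<bar>a\<bar> < 1"
  shows "(n gchoose i) * integral {0..pi} (\<lambda>\<phi>. cos (real i * \<phi>) / (Theta a \<phi>) powr (n + 1))
       = ((- n - 1) gchoose i) * integral {0..pi} (\<lambda>\<phi>. (Theta a \<phi>) powr n * cos (real i * \<phi>))"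
proof -
  obtain c b where cb: "c\<^sup>2 - b\<^sup>2 = 1" "\<bar>b\<bar> < c" and Theta: "\<And>\<phi>. Theta a \<phi> = c - b * cos \<phi>"
    using Theta_eq_cos_affine[OF assms] by blast
  have "integral {0..pi} (\<lambda>\<phi>. cos (real i * \<phi>) / (Theta a \<phi>) powr (n + 1)) = cos_moment c b (-n-1) i"
    unfolding cos_moment_def Theta
    using powr_minus_divide[of "c - b * cos _" "n + 1"] by (intro integral_cong) simp
  moreover have "integral {0..pi} (\<lambda>\<phi>. (Theta a \<phi>) powr n * cos (real i * \<phi>)) = cos_moment c b n i"
    unfolding cos_moment_def Theta ..
  ultimately show ?thesis
    using gchoose_cos_moment_symmetric[OF cb, of n i] by simp
qed

end
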